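(* Let $s\ge1$ be an integer and $c=N/D$ a rational with $1/(s+1)<c<1/s$ ($N,D$ positive integers). Put $a=(s+1-1/c)N$ and $b=(1/c-s)N$ (positive integers, assuming these are integral, e.g. after scaling $N,D$). For $p\in[0,1]$ let $g_p(x,y)=p\bigl(1-(1-x)^s\bigr)+(1-p)\bigl(1-(1-y)^{s+1}\bigr)$. Then there exists $p\in[0,1]$ such that $$\max\Bigl\{g_p(x,y):0\le x,y\le1,\ \tfrac{a}{a+b}\,s\,x+\tfrac{b}{a+b}\,(s+1)\,y=1\Bigr\}=\rho(c).$$
   Context: Definition of $\rho(c)$ for $1/(s+1)<c<1/s$: with $\sigma(\alpha,m)=\bigl(1-\alpha c-(1-\alpha)/m\bigr)^m$, there is a unique $\alpha^*\in(0,1)$ with $\sigma(\alpha^*,s)=\sigma(\alpha^*,s+1)$, and $\rho(c)=1-\sigma(\alpha^*,s)$. *)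

theory Defs
  imports Complex_Main
begin

definition sigma :: "real \<Rightarrow> real \<Rightarrow> nat \<Rightarrow> real" where
  "sigma c \<alpha> m = (1 - \<alpha> * c - (1 - \<alpha>) / real m) ^ m"

definition alpha_star :: "nat \<Rightarrow> real \<Rightarrow> real" where
  "alpha_star s c = (THE \<alpha>. 0 < \<alpha> \<and> \<alpha> < 1 \<and> sigma c \<alpha> s = sigma c \<alpha> (s + 1))"

definition rho :: "nat \<Rightarrow> real \<Rightarrow> real" where
  "rho s c = 1 - sigma c (alpha_star s c) s"

definition g :: "nat \<Rightarrow> real \<Rightarrow> real \<Rightarrow> real \<Rightarrow> real" where
  "g s p x y = p * (1 - (1 - x) ^ s) + (1 - p) * (1 - (1 - y) ^ (s + 1))"

end

theory Submission imports Defs begin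

text \<open>Substituting \<open>u = 1 - x\<close>, \<open>w = 1 - y\<close>, the function \<open>g\<^sub>p\<close> becomes
  \<open>1 - p u\<^sup>s - (1 - p) w\<^sup>s\<^sup>+\<^sup>1\<close>, a concave function, and the constraint is a line with
  weights \<open>\<theta> s\<close> and \<open>(1 - \<theta>) (s + 1)\<close>, where \<open>\<theta> = a/(a + b) = s + 1 - 1/c\<close>.
  For every \<open>\<alpha>\<close> the point \<open>u\<^sub>0 = 1 - \<alpha> c - (1 - \<alpha>)/s\<close>, \<open>w\<^sub>0 = 1 - \<alpha> c - (1 - \<alpha>)/(s + 1)\<close>
  lies on that line, and for \<open>\<alpha> = \<alpha>\<^sup>*\<close> it satisfies \<open>u\<^sub>0\<^sup>s = w\<^sub>0\<^sup>s\<^sup>+\<^sup>1 = 1 - \<rho>(c)\<close>, so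
  \<open>g\<^sub>p = \<rho>(c)\<close> there for every \<open>p\<close>. Choosing \<open>p\<close> so that the gradient of \<open>g\<^sub>p\<close> at
  this point is normal to the line, the tangent plane bounds the concave \<open>g\<^sub>p\<close>
  on the line by \<open>\<rho>(c)\<close>. Existence and uniqueness of \<open>\<alpha>\<^sup>*\<close> follow from the
  intermediate value theorem, since \<open>\<sigma>(\<alpha>, s) - \<sigma>(\<alpha>, s + 1)\<close> increases strictly
  from a negative value at \<open>\<alpha> = 0\<close> to a positive one at \<open>\<alpha> = 1\<close>.\<close>

lemma power_ge_tangent:
  fixes u v :: real and n :: nat
  assumes "0 \<le> u" "0 < v"
  shows "v ^ n + real n * v ^ (n - 1) * (u - v) \<le> u ^ n"
proof (cases n)
  case 0 then show ?thesis by simp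
next
  case (Suc m)
  have "1 + real n * (u / v - 1) \<le> (1 + (u / v - 1)) ^ n"
    by (rule Bernoulli_inequality) (use assms in \<open>simp add: field_simps\<close>)
  then have "v ^ n * (1 + real n * (u / v - 1)) \<le> v ^ n * (u / v) ^ n"
    using assms by (intro mult_left_mono) auto
  also have "\<dots> = u ^ n"
    using assms by (simp add: power_divide)
  also have "v ^ n * (1 + real n * (u / v - 1)) = v ^ n + real n * v ^ (n - 1) * (u - v)"
    using assms Suc by (simp add: field_simps)
  finally show ?thesis .
qed

lemma convex_comb_powers_ge_at_tangency:
  fixes u w u\<^sub>0 w\<^sub>0 p :: real and m n :: nat
  assumes "0 \<le> u" "0 \<le> w" "0 < u\<^sub>0" "0 < w\<^sub>0" "0 \<le> p" "p \<le> 1"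
    and "p * real m * u\<^sub>0 ^ (m - 1) * (u - u\<^sub>0) + (1 - p) * real n * w\<^sub>0 ^ (n - 1) * (w - w\<^sub>0) = 0"
  shows "p * u\<^sub>0 ^ m + (1 - p) * w\<^sub>0 ^ n \<le> p * u ^ m + (1 - p) * w ^ n"
proof -
  have "p * (u\<^sub>0 ^ m + real m * u\<^sub>0 ^ (m - 1) * (u - u\<^sub>0))
      + (1 - p) * (w\<^sub>0 ^ n + real n * w\<^sub>0 ^ (n - 1) * (w - w\<^sub>0))
      \<le> p * u ^ m + (1 - p) * w ^ n"
    using assms by (intro add_mono mult_left_mono power_ge_tangent) auto
  with assms(7) show ?thesis by (simp add: algebra_simps)
qed

lemma exists_weight_proportional:
  fixes \<alpha>\<^sub>1 \<alpha>\<^sub>2 \<beta>\<^sub>1 \<beta>\<^sub>2 :: real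
  assumes "0 < \<alpha>\<^sub>1" "0 < \<alpha>\<^sub>2" "0 \<le> \<beta>\<^sub>1" "0 \<le> \<beta>\<^sub>2" "0 < \<beta>\<^sub>1 + \<beta>\<^sub>2"
  shows "\<exists>p k. 0 \<le> p \<and> p \<le> 1 \<and> p * \<alpha>\<^sub>1 = k * \<beta>\<^sub>1 \<and> (1 - p) * \<alpha>\<^sub>2 = k * \<beta>\<^sub>2"
proof -
  have d: "0 < \<beta>\<^sub>1 * \<alpha>\<^sub>2 + \<beta>\<^sub>2 * \<alpha>\<^sub>1"
    using assms by (cases "\<beta>\<^sub>1 = 0") (auto intro: add_pos_nonneg add_nonneg_pos)
  show ?thesis
    by (rule exI[of _ "\<beta>\<^sub>1 * \<alpha>\<^sub>2 / (\<beta>\<^sub>1 * \<alpha>\<^sub>2 + \<beta>\<^sub>2 * \<alpha>\<^sub>1)"], rule exI[of _ "\<alpha>\<^sub>1 * \<alpha>\<^sub>2 / (\<beta>\<^sub>1 * \<alpha>\<^sub>2 + \<beta>\<^sub>2 * \<alpha>\<^sub>1)"])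
      (use assms d in \<open>auto simp: field_simps\<close>)
qed

lemma g_le_at_tangency:
  fixes s :: nat and p k \<beta>\<^sub>1 \<beta>\<^sub>2 x y x\<^sub>0 y\<^sub>0 :: real
  assumes "x \<le> 1" "y \<le> 1" "x\<^sub>0 < 1" "y\<^sub>0 < 1" "0 \<le> p" "p \<le> 1"
    and "p * (real s * (1 - x\<^sub>0) ^ (s - 1)) = k * \<beta>\<^sub>1"
    and "(1 - p) * (real (s + 1) * (1 - y\<^sub>0) ^ s) = k * \<beta>\<^sub>2"
    and "\<beta>\<^sub>1 * x + \<beta>\<^sub>2 * y = \<beta>\<^sub>1 * x\<^sub>0 + \<beta>\<^sub>2 * y\<^sub>0"
  shows "g s p x y \<le> g s p x\<^sub>0 y\<^sub>0"
proof -
  have "p * real s * (1 - x\<^sub>0) ^ (s - 1) * ((1 - x) - (1 - x\<^sub>0))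
      + (1 - p) * real (s + 1) * (1 - y\<^sub>0) ^ (s + 1 - 1) * ((1 - y) - (1 - y\<^sub>0))
      = k * (\<beta>\<^sub>1 * x\<^sub>0 + \<beta>\<^sub>2 * y\<^sub>0 - (\<beta>\<^sub>1 * x + \<beta>\<^sub>2 * y))"
    using assms(7,8) by (simp add: algebra_simps)
  then have "p * (1 - x\<^sub>0) ^ s + (1 - p) * (1 - y\<^sub>0) ^ (s + 1) \<le> p * (1 - x) ^ s + (1 - p) * (1 - y) ^ (s + 1)"
    using assms by (intro convex_comb_powers_ge_at_tangency) auto
  then show ?thesis unfolding g_def by (simp add: algebra_simps)
qed

lemma sigma_base_eq:
  "1 - \<alpha> * c - (1 - \<alpha>) / real m = (1 - \<alpha>) * (1 - 1 / real m) + \<alpha> * (1 - c)"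
  by (simp add: algebra_simps diff_divide_distrib)

lemma one_sub_inverse_power_strict_mono:
  fixes s :: nat assumes "1 \<le> s"
  shows "(1 - 1 / real s) ^ s < (1 - 1 / real (s + 1)) ^ (s + 1)"
proof (cases "s = 1")
  case True then show ?thesis by simp
next
  case False
  define r where "r = real s"
  have r2: "2 \<le> r" and rr: "4 \<le> r\<^sup>2"
    using assms False power_mono[of 2 r 2] unfolding r_def by auto
  have e1: "1 - 1 / real s = (r - 1) / r" and e2: "1 - 1 / real (s + 1) = r / (r + 1)"
    using r2 unfolding r_def by (simp_all add: field_simps)
  \<comment> \<open>the ratio of consecutive bases is \<open>1 + 1/(r\<^sup>2 - 1)\<close>, and Bernoulli bounds its \<open>s\<close>-th power\<close>
  have e3: "r / (r + 1) = (r - 1) / r * (1 + 1 / (r\<^sup>2 - 1))"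
    using r2 rr by (simp add: field_simps power2_eq_square)
  have bernoulli: "1 + r * (1 / (r\<^sup>2 - 1)) \<le> (1 + 1 / (r\<^sup>2 - 1)) ^ s"
  proof -
    have "0 \<le> 1 / (r\<^sup>2 - 1)" using rr by simp
    then show ?thesis unfolding r_def by (intro Bernoulli_inequality) linarith
  qed
  have pos: "0 < r + 1" "0 < r\<^sup>2 - 1" and den: "0 < (r + 1) * (r\<^sup>2 - 1)"
    using r2 rr by simp_all
  have "r / (r + 1) * (1 + r * (1 / (r\<^sup>2 - 1))) = ((r + 1) * (r\<^sup>2 - 1) + 1) / ((r + 1) * (r\<^sup>2 - 1))"
    using pos by (simp add: field_simps power2_eq_square)
  then have "1 < r / (r + 1) * (1 + r * (1 / (r\<^sup>2 - 1)))"
    using den by simp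
  also have "\<dots> \<le> r / (r + 1) * (1 + 1 / (r\<^sup>2 - 1)) ^ s"
    using bernoulli r2 by (intro mult_left_mono) auto
  finally have "((r - 1) / r) ^ s * 1 < ((r - 1) / r) ^ s * (r / (r + 1) * (1 + 1 / (r\<^sup>2 - 1)) ^ s)"
    using r2 by (intro mult_strict_left_mono) auto
  also have "\<dots> = r / (r + 1) * ((r - 1) / r * (1 + 1 / (r\<^sup>2 - 1))) ^ s"
    by (simp only: power_mult_distrib ac_simps)
  also have "\<dots> = (r / (r + 1)) ^ (s + 1)"
    unfolding e3[symmetric] by simp
  finally show ?thesis unfolding e1 e2 by simp
qed

lemma sigma_base_bounds:
  assumes "0 < \<alpha>" "\<alpha> < 1" "0 < c" "c < 1" "1 \<le> m"
  shows "0 < 1 - \<alpha> * c - (1 - \<alpha>) / real m" "1 - \<alpha> * c - (1 - \<alpha>) / real m \<le> 1"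
proof -
  have "0 \<le> 1 - 1 / real m"
    using assms(5) by (simp add: field_simps)
  then have "0 \<le> (1 - \<alpha>) * (1 - 1 / real m)" "0 < \<alpha> * (1 - c)"
    using assms by simp_all
  then show "0 < 1 - \<alpha> * c - (1 - \<alpha>) / real m"
    unfolding sigma_base_eq by linarith
  have "0 \<le> \<alpha> * c" "0 \<le> (1 - \<alpha>) / real m"
    using assms by simp_all
  then show "1 - \<alpha> * c - (1 - \<alpha>) / real m \<le> 1"
    by linarith
qed

lemma sigma_diff_strict_mono:
  assumes "1 \<le> s" "1 / real (s + 1) < c" "c < 1 / real s" "0 \<le> \<alpha>" "\<alpha> < \<beta>" "\<beta> \<le> 1"
  shows "sigma c \<alpha> s - sigma c \<alpha> (s + 1) < sigma c \<beta> s - sigma c \<beta> (s + 1)"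
proof -
  have "1 / real s \<le> 1"
    using assms(1) by simp
  with assms(3) have c1: "c < 1"
    by linarith
  define u where "u \<xi> = 1 - \<xi> * c - (1 - \<xi>) / real s" for \<xi>
  define w where "w \<xi> = 1 - \<xi> * c - (1 - \<xi>) / real (s + 1)" for \<xi>
  have "u \<beta> - u \<alpha> = (\<beta> - \<alpha>) * (1 / real s - c)" "w \<alpha> - w \<beta> = (\<beta> - \<alpha>) * (c - 1 / real (s + 1))"
    unfolding u_def w_def by (simp_all add: algebra_simps diff_divide_distrib)
  moreover have "0 < (\<beta> - \<alpha>) * (1 / real s - c)" "0 < (\<beta> - \<alpha>) * (c - 1 / real (s + 1))"
    using assms(2,3,5) by simp_all
  ultimately have "u \<alpha> < u \<beta>" "w \<beta> < w \<alpha>"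
    by linarith+
  moreover have "0 \<le> u \<alpha>" "0 < w \<beta>"
  proof -
    have "0 \<le> 1 - 1 / real s" "0 \<le> 1 - 1 / real (s + 1)"
      using assms(1) by (simp_all add: field_simps)
    then have "0 \<le> (1 - \<alpha>) * (1 - 1 / real s)" "0 \<le> \<alpha> * (1 - c)"
      "0 \<le> (1 - \<beta>) * (1 - 1 / real (s + 1))" "0 < \<beta> * (1 - c)"
      using assms(4-6) c1 by simp_all
    then show "0 \<le> u \<alpha>" "0 < w \<beta>"
      unfolding u_def w_def sigma_base_eq by linarith+
  qed
  ultimately have "u \<alpha> ^ s < u \<beta> ^ s" "w \<beta> ^ (s + 1) < w \<alpha> ^ (s + 1)"
    using assms(1) power_strict_mono[of "w \<beta>" "w \<alpha>" "s + 1"] by (simp_all add: power_strict_mono)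
  then show ?thesis
    unfolding sigma_def u_def w_def by simp
qed

lemma alpha_star_spec:
  assumes "1 \<le> s" "1 / real (s + 1) < c" "c < 1 / real s"
  shows "0 < alpha_star s c \<and> alpha_star s c < 1 \<and>
    sigma c (alpha_star s c) s = sigma c (alpha_star s c) (s + 1)"
proof -
  define F where "F \<alpha> = sigma c \<alpha> s - sigma c \<alpha> (s + 1)" for \<alpha>
  have "0 < c" "c < 1"
    using assms less_le_trans[of 0 "1 / real (s + 1)" c] less_le_trans[of c "1 / real s" 1]
    by simp_all
  then have F1: "0 < F 1"
    unfolding F_def sigma_def by (simp add: power_strict_decreasing)
  have F0: "F 0 < 0"
    using one_sub_inverse_power_strict_mono[OF assms(1)] unfolding F_def sigma_def by simp
  have "continuous_on {0..1} F"
    unfolding F_def sigma_def by (intro continuous_intros) (use assms(1) in auto)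
  then obtain \<alpha>\<^sub>0 where \<alpha>\<^sub>0: "0 \<le> \<alpha>\<^sub>0" "\<alpha>\<^sub>0 \<le> 1" "F \<alpha>\<^sub>0 = 0"
    using IVT'[of F 0 0 1] F0 F1 by auto
  have mono: "F \<alpha> < F \<beta>" if "0 \<le> \<alpha>" "\<alpha> < \<beta>" "\<beta> \<le> 1" for \<alpha> \<beta>
    unfolding F_def using sigma_diff_strict_mono[OF assms that] .
  have "\<exists>!\<alpha>. 0 < \<alpha> \<and> \<alpha> < 1 \<and> sigma c \<alpha> s = sigma c \<alpha> (s + 1)"
  proof (rule ex_ex1I)
    show "\<exists>\<alpha>. 0 < \<alpha> \<and> \<alpha> < 1 \<and> sigma c \<alpha> s = sigma c \<alpha> (s + 1)"
      using \<alpha>\<^sub>0 F0 F1 unfolding F_def by (intro exI[of _ \<alpha>\<^sub>0]) (auto simp: less_le)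
  next
    fix \<alpha> \<beta>
    assume "0 < \<alpha> \<and> \<alpha> < 1 \<and> sigma c \<alpha> s = sigma c \<alpha> (s + 1)"
      "0 < \<beta> \<and> \<beta> < 1 \<and> sigma c \<beta> s = sigma c \<beta> (s + 1)"
    then show "\<alpha> = \<beta>"
      using mono[of \<alpha> \<beta>] mono[of \<beta> \<alpha>] unfolding F_def by (cases \<alpha> \<beta> rule: linorder_cases) auto
  qed
  then show ?thesis
    unfolding alpha_star_def by (rule theI')
qed

lemma tangency_point_on_constraint:
  fixes s :: nat and c \<alpha> :: real
  assumes "0 < s" "c \<noteq> 0"
  shows "(real s + 1 - 1 / c) * real s * (\<alpha> * c + (1 - \<alpha>) / real s)
    + (1 - (real s + 1 - 1 / c)) * real (s + 1) * (\<alpha> * c + (1 - \<alpha>) / real (s + 1)) = 1"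
proof -
  define \<theta> where "\<theta> = real s + 1 - 1 / c"
  have sx: "real s * (\<alpha> * c + (1 - \<alpha>) / real s) = real s * \<alpha> * c + (1 - \<alpha>)"
    and sy: "real (s + 1) * (\<alpha> * c + (1 - \<alpha>) / real (s + 1)) = real (s + 1) * \<alpha> * c + (1 - \<alpha>)"
    using assms(1) by (simp_all add: field_simps)
  have "\<theta> * real s * (\<alpha> * c + (1 - \<alpha>) / real s)
      + (1 - \<theta>) * real (s + 1) * (\<alpha> * c + (1 - \<alpha>) / real (s + 1))
      = \<theta> * (real s * \<alpha> * c + (1 - \<alpha>)) + (1 - \<theta>) * (real (s + 1) * \<alpha> * c + (1 - \<alpha>))"
    unfolding sx[symmetric] sy[symmetric] by (simp only: mult.assoc)
  also have "\<dots> = (1 - \<alpha>) + \<alpha> * c * (real s + 1 - \<theta>)"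
    by (simp add: algebra_simps)
  also have "\<dots> = 1"
    unfolding \<theta>_def using assms(2) by simp
  finally show ?thesis
    unfolding \<theta>_def .
qed

lemma rho_attained_on_constraint:
  assumes "1 \<le> s" "1 / real (s + 1) < c" "c < 1 / real s"
  shows "\<exists>x\<^sub>0 y\<^sub>0. 0 \<le> x\<^sub>0 \<and> x\<^sub>0 < 1 \<and> 0 \<le> y\<^sub>0 \<and> y\<^sub>0 < 1 \<and>
    (real s + 1 - 1 / c) * real s * x\<^sub>0 + (1 - (real s + 1 - 1 / c)) * real (s + 1) * y\<^sub>0 = 1 \<and>
    (\<forall>p. g s p x\<^sub>0 y\<^sub>0 = rho s c)"
proof -
  have c: "0 < c" "c < 1"
    using assms less_le_trans[of 0 "1 / real (s + 1)" c] less_le_trans[of c "1 / real s" 1]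
    by simp_all
  define \<alpha> where "\<alpha> = alpha_star s c"
  have \<alpha>: "0 < \<alpha>" "\<alpha> < 1" "sigma c \<alpha> s = sigma c \<alpha> (s + 1)"
    using alpha_star_spec[OF assms] unfolding \<alpha>_def by auto
  define x\<^sub>0 where "x\<^sub>0 = \<alpha> * c + (1 - \<alpha>) / real s"
  define y\<^sub>0 where "y\<^sub>0 = \<alpha> * c + (1 - \<alpha>) / real (s + 1)"
  have "0 \<le> x\<^sub>0" "x\<^sub>0 < 1" "0 \<le> y\<^sub>0" "y\<^sub>0 < 1"
    using sigma_base_bounds[OF \<alpha>(1,2) c, of s] sigma_base_bounds[OF \<alpha>(1,2) c, of "s + 1"] assms(1)
    unfolding x\<^sub>0_def y\<^sub>0_def by (simp_all add: algebra_simps)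
  moreover have "(real s + 1 - 1 / c) * real s * x\<^sub>0 + (1 - (real s + 1 - 1 / c)) * real (s + 1) * y\<^sub>0 = 1"
    using tangency_point_on_constraint[of s c \<alpha>] assms(1) c unfolding x\<^sub>0_def y\<^sub>0_def by simp
  moreover have "sigma c \<alpha> s = (1 - x\<^sub>0) ^ s" "sigma c \<alpha> (s + 1) = (1 - y\<^sub>0) ^ (s + 1)"
    unfolding sigma_def x\<^sub>0_def y\<^sub>0_def by (simp_all add: algebra_simps)
  then have equal_powers: "(1 - y\<^sub>0) ^ (s + 1) = (1 - x\<^sub>0) ^ s" and "rho s c = 1 - (1 - x\<^sub>0) ^ s"
    using \<alpha>(3) unfolding rho_def \<alpha>_def by simp_all
  then have "g s p x\<^sub>0 y\<^sub>0 = rho s c" for p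
    unfolding g_def equal_powers by (simp add: algebra_simps)
  ultimately show ?thesis
    by blast
qed

theorem mainTheorem9:
  fixes s N D :: nat and c a b :: real
  assumes "s \<ge> 1" and "N > 0" and "D > 0"
    and "c = real N / real D"
    and "1 / real (s + 1) < c" and "c < 1 / real s"
    and "a = (real s + 1 - 1 / c) * real N"
    and "b = (1 / c - real s) * real N"
    and "a \<in> \<int>" and "b \<in> \<int>"
  shows "\<exists>p. 0 \<le> p \<and> p \<le> 1 \<and>
    (\<exists>x y. 0 \<le> x \<and> x \<le> 1 \<and> 0 \<le> y \<and> y \<le> 1 \<and>
        a / (a + b) * real s * x + b / (a + b) * real (s + 1) * y = 1 \<and>
        g s p x y = rho s c) \<and>
    (\<forall>x y. 0 \<le> x \<and> x \<le> 1 \<and> 0 \<le> y \<and> y \<le> 1 \<and>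
        a / (a + b) * real s * x + b / (a + b) * real (s + 1) * y = 1 \<longrightarrow>
        g s p x y \<le> rho s c)"
proof -
  \<comment> \<open>Only \<open>a/(a + b) = s + 1 - 1/c\<close> matters.\<close>
  define \<theta> where "\<theta> = real s + 1 - 1 / c"
  have "0 < c"
    using assms(5) less_le_trans[of 0 "1 / real (s + 1)" c] by simp
  then have \<theta>: "0 < \<theta>" "\<theta> < 1"
    using assms(1,5,6) unfolding \<theta>_def by (simp_all add: field_simps)
  have "a + b = real N"
    using assms(7,8) by (simp add: algebra_simps)
  then have weights: "a / (a + b) = \<theta>" "b / (a + b) = 1 - \<theta>"
    using assms(2,7,8) unfolding \<theta>_def by auto
  obtain x\<^sub>0 y\<^sub>0 where x\<^sub>0: "0 \<le> x\<^sub>0" "x\<^sub>0 < 1" and y\<^sub>0: "0 \<le> y\<^sub>0" "y\<^sub>0 < 1"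
    and on_line: "\<theta> * real s * x\<^sub>0 + (1 - \<theta>) * real (s + 1) * y\<^sub>0 = 1"
    and rho: "\<And>p. g s p x\<^sub>0 y\<^sub>0 = rho s c"
    using rho_attained_on_constraint[OF assms(1,5,6)] unfolding \<theta>_def by blast
  have "\<exists>p k. 0 \<le> p \<and> p \<le> 1 \<and> p * (real s * (1 - x\<^sub>0) ^ (s - 1)) = k * (\<theta> * real s) \<and>
      (1 - p) * (real (s + 1) * (1 - y\<^sub>0) ^ s) = k * ((1 - \<theta>) * real (s + 1))"
    by (rule exists_weight_proportional) (use assms(1) x\<^sub>0 y\<^sub>0 \<theta> in \<open>auto intro: add_nonneg_pos\<close>)
  then obtain p k where p: "0 \<le> p" "p \<le> 1"
    and slopes: "p * (real s * (1 - x\<^sub>0) ^ (s - 1)) = k * (\<theta> * real s)"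
      "(1 - p) * (real (s + 1) * (1 - y\<^sub>0) ^ s) = k * ((1 - \<theta>) * real (s + 1))"
    by blast
  have "g s p x y \<le> g s p x\<^sub>0 y\<^sub>0"
    if "x \<le> 1" "y \<le> 1" "\<theta> * real s * x + (1 - \<theta>) * real (s + 1) * y = 1" for x y
    by (rule g_le_at_tangency[OF that(1,2) x\<^sub>0(2) y\<^sub>0(2) p slopes]) (simp only: that(3) on_line)
  then show ?thesis
    unfolding weights rho[of p, symmetric]
    using x\<^sub>0 y\<^sub>0 on_line p by (intro exI[of _ p]) (auto intro: less_imp_le)
qed

end
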